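(* Let $d\in\{2,3\}$ and let $|\mu\rangle,|\lambda\rangle,|\bar\mu\rangle,|\bar\lambda\rangle\in\mathbb{C}^d\otimes\mathbb{C}^d$ be normalized states of full Schmidt rank $d$. If $|\mu\rangle\otimes|\lambda\rangle$ can be transformed into $|\bar\mu\rangle\otimes|\bar\lambda\rangle$ by a local unitary, then either ($|\bar\mu\rangle$ is LU-equivalent to $|\mu\rangle$ and $|\bar\lambda\rangle$ is LU-equivalent to $|\lambda\rangle$) or ($|\bar\mu\rangle$ is LU-equivalent to $|\lambda\rangle$ and $|\bar\lambda\rangle$ is LU-equivalent to $|\mu\rangle$).
   Context: The state $|\mu\rangle\otimes|\lambda\rangle$ is regarded as a bipartite state between two parties, each holding two $d$-dimensional subsystems. A local unitary is $U_A\otimes U_B$ with $U_A,U_B\in\mathrm{U}(d^2)$. Two bipartite states are LU-equivalent if and only if their tuples of squared Schmidt coefficients coincide up to reordering. *)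

theory Defs
  imports "HOL-Analysis.Analysis"
begin

text \<open>A bipartite pure state on C^A (x) C^B is represented by its coefficient
  matrix C, i.e. the state is the sum over a b of C a b |a> (x) |b>.\<close>

definition adj_mat :: "complex^'n^'n \<Rightarrow> complex^'n^'n" where
  "adj_mat U = (\<chi> i j. cnj (U $ j $ i))"

definition unitary_mat :: "complex^'n^'n \<Rightarrow> bool" where
  "unitary_mat U \<longleftrightarrow> U ** adj_mat U = mat 1 \<and> adj_mat U ** U = mat 1"

definition local_apply ::
  "complex^'a^'a \<Rightarrow> complex^'b^'b \<Rightarrow> complex^'b^'a \<Rightarrow> complex^'b^'a" where
  "local_apply UA UB C = (\<chi> a b. \<Sum>a'\<in>UNIV. \<Sum>b'\<in>UNIV. UA $ a $ a' * UB $ b $ b' * C $ a' $ b')"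

definition LU_equiv :: "complex^'b^'a \<Rightarrow> complex^'b^'a \<Rightarrow> bool" where
  "LU_equiv C D \<longleftrightarrow> (\<exists>UA UB. unitary_mat UA \<and> unitary_mat UB \<and> local_apply UA UB C = D)"

definition normalized :: "complex^'b^'a \<Rightarrow> bool" where
  "normalized C \<longleftrightarrow> (\<Sum>a\<in>UNIV. \<Sum>b\<in>UNIV. (cmod (C $ a $ b))\<^sup>2) = 1"

definition schmidt_rank :: "complex^'b^'a \<Rightarrow> nat" where
  "schmidt_rank C = rank C"

text \<open>Tensor product of two bipartite states on d x d, regarded as a bipartite
  state between parties A = (A1,A2) and B = (B1,B2).\<close>
definition state_tensor :: "complex^'n^'n \<Rightarrow> complex^'n^'n \<Rightarrow> complex^('n\<times>'n)^('n\<times>'n)" where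
  "state_tensor M L = (\<chi> p q. M $ fst p $ fst q * L $ snd p $ snd q)"

end

(*
  A full-rank state is LU-equivalent to the diagonal matrix of its Schmidt
  coefficients, and two such diagonal states are LU-equivalent exactly when their coefficient
  multisets agree: a unitary Q with diag(t^2) Q = Q diag(s^2) only links equal coefficients,
  and the squared moduli of its entries form a doubly stochastic matrix. The Schmidt
  coefficients of mu (x) lambda are the products a_i b_j of those of mu and lambda, so the
  hypothesis says that the multisets {a_i b_j} and {c_k e_l} coincide. Taking logarithms and
  measuring distances from the largest element turns this into an equality of multisets of
  sums of gaps, {0, p, q, r, s, p + r, p + s, q + r, q + s} for d = 3; a short case analysis
  shows that the gaps of the factors agree up to swapping the two factors. Hence the factors
  agree up to a common rescaling, which normalization removes.
*)
theory Submission
  imports Defs "HOL-Library.Multiset"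
begin

section \<open>Unitary matrices and local unitary equivalence\<close>

lemma adj_mat_nth [simp]: "adj_mat U $ i $ j = cnj (U $ j $ i)"
  by (simp add: adj_mat_def)

lemma local_apply_eq_mult: "local_apply A B C = A ** C ** transpose B"
proof -
  have "(\<Sum>a'\<in>UNIV. \<Sum>b'\<in>UNIV. A $ a $ a' * B $ b $ b' * C $ a' $ b') =
        (\<Sum>k\<in>UNIV. (\<Sum>a'\<in>UNIV. A $ a $ a' * C $ a' $ k) * B $ b $ k)" for a b
    by (subst sum.swap) (simp add: sum_distrib_left sum_distrib_right mult_ac)
  thus ?thesis
    by (simp add: local_apply_def matrix_matrix_mult_def transpose_def vec_eq_iff)
qed

lemma adj_mat_mult: "adj_mat (A ** B) = adj_mat B ** adj_mat (A :: complex^'n^'n)"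
  by (simp add: vec_eq_iff matrix_matrix_mult_def mult.commute)

lemma adj_mat_adj_mat [simp]: "adj_mat (adj_mat A) = A"
  by (simp add: vec_eq_iff)

lemma adj_mat_transpose: "adj_mat (transpose A) = transpose (adj_mat A)"
  by (simp add: vec_eq_iff transpose_def)

lemma unitary_matI: "adj_mat U ** U = mat 1 \<Longrightarrow> unitary_mat (U :: complex^'n^'n)"
  unfolding unitary_mat_def using matrix_left_right_inverse by blast

lemma unitary_matI': "U ** adj_mat U = mat 1 \<Longrightarrow> unitary_mat (U :: complex^'n^'n)"
  unfolding unitary_mat_def using matrix_left_right_inverse by blast

lemma unitary_mat_adj: "unitary_mat U \<Longrightarrow> unitary_mat (adj_mat U)"
  by (simp add: unitary_mat_def)

lemma unitary_mat_mult:
  assumes "unitary_mat U" "unitary_mat V"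
  shows "unitary_mat (U ** V)"
proof (rule unitary_matI)
  have "adj_mat (U ** V) ** (U ** V) = adj_mat V ** (adj_mat U ** U) ** V"
    by (simp add: adj_mat_mult matrix_mul_assoc)
  thus "adj_mat (U ** V) ** (U ** V) = mat 1" using assms by (simp add: unitary_mat_def)
qed

lemma unitary_mat_transpose:
  assumes "unitary_mat U"
  shows "unitary_mat (transpose U)"
proof (rule unitary_matI)
  have "adj_mat (transpose U) ** transpose U = transpose (U ** adj_mat U)"
    by (simp add: adj_mat_transpose matrix_transpose_mul)
  thus "adj_mat (transpose U) ** transpose U = mat 1" using assms by (simp add: unitary_mat_def)
qed

lemma local_apply_local_apply:
  "local_apply A B (local_apply C D X) = local_apply (A ** C) (B ** D) X"
  by (simp add: local_apply_eq_mult matrix_transpose_mul matrix_mul_assoc)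

lemma LU_equivI:
  "unitary_mat U \<Longrightarrow> unitary_mat V \<Longrightarrow> LU_equiv X (local_apply U V X)"
  unfolding LU_equiv_def by blast

lemma LU_equiv_trans: "LU_equiv X Y \<Longrightarrow> LU_equiv Y Z \<Longrightarrow> LU_equiv X Z"
  unfolding LU_equiv_def by (metis local_apply_local_apply unitary_mat_mult)

lemma LU_equiv_sym:
  assumes "LU_equiv X Y"
  shows "LU_equiv Y X"
proof -
  obtain U V where U: "unitary_mat U" and V: "unitary_mat V" and Y: "local_apply U V X = Y"
    using assms unfolding LU_equiv_def by blast
  have "local_apply (adj_mat U) (adj_mat V) Y = X"
    using U V unfolding Y[symmetric] local_apply_local_apply
    by (simp add: unitary_mat_def local_apply_eq_mult)
  thus ?thesis using LU_equivI[OF unitary_mat_adj[OF U] unitary_mat_adj[OF V], of Y] by simp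
qed

section \<open>Spectral theorem for Hermitian matrices\<close>

definition cinner :: "complex^'n \<Rightarrow> complex^'n \<Rightarrow> complex" where
  "cinner x y = (\<Sum>k\<in>UNIV. x $ k * cnj (y $ k))"

definition hermitian :: "complex^'n^'n \<Rightarrow> bool" where
  "hermitian H \<longleftrightarrow> adj_mat H = H"

lemma cinner_add_left: "cinner (x + y) z = cinner x z + cinner y z"
  by (simp add: cinner_def distrib_right sum.distrib)

lemma cinner_add_right: "cinner z (x + y) = cinner z x + cinner z y"
  by (simp add: cinner_def distrib_left sum.distrib)

lemma cinner_diff_left: "cinner (x - y) z = cinner x z - cinner y z"
  by (simp add: cinner_def left_diff_distrib sum_subtractf)

lemma cinner_scale_left: "cinner (c *s x) y = c * cinner x y"
  by (simp add: cinner_def sum_distrib_left mult.assoc)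

lemma cinner_scale_right: "cinner x (c *s y) = cnj c * cinner x y"
  by (simp add: cinner_def sum_distrib_left mult_ac)

lemma vector_scaleR_nth_complex: "(r *\<^sub>R x) $ k = complex_of_real r * (x $ k)"
  unfolding vector_scaleR_component by (rule scaleR_conv_of_real)

lemma cinner_scaleR_left: "cinner (r *\<^sub>R x) y = of_real r * cinner x y"
  by (simp add: cinner_def sum_distrib_left vector_scaleR_nth_complex mult.assoc
      del: vector_scaleR_component)

lemma cinner_scaleR_right: "cinner x (r *\<^sub>R y) = of_real r * cinner x y"
  by (simp add: cinner_def sum_distrib_left vector_scaleR_nth_complex mult_ac
      del: vector_scaleR_component)

lemma cnj_cinner: "cnj (cinner x y) = cinner y x"
  by (simp add: cinner_def mult.commute)

lemma cinner_self: "cinner x x = of_real ((norm x)\<^sup>2)"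
proof -
  have "cinner x x = (\<Sum>k\<in>UNIV. complex_of_real ((cmod (x $ k))\<^sup>2))"
    unfolding cinner_def by (rule sum.cong) (simp_all only: complex_norm_square)
  also have "\<dots> = of_real ((norm x)\<^sup>2)"
    by (simp add: norm_vec_def L2_set_def sum_nonneg)
  finally show ?thesis .
qed

lemma inner_eq_Re_cinner: "(a :: complex^'n) \<bullet> u = Re (cinner a u)"
  by (simp add: inner_vec_def cinner_def inner_complex_def)

lemma inner_ii_eq_Im_cinner: "(a :: complex^'n) \<bullet> (\<i> *s u) = Im (cinner a u)"
  by (simp add: inner_vec_def cinner_def inner_complex_def algebra_simps)

lemma matrix_vector_mult_scaleR: "H *v (r *\<^sub>R x) = r *\<^sub>R (H *v (x :: complex^'n))"
  by (simp add: vec_eq_iff matrix_vector_mult_def scaleR_sum_right)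

lemma hermitian_cinner:
  assumes "hermitian H"
  shows "cinner (H *v x) y = cinner x (H *v y)"
proof -
  have h: "cnj (H $ l $ k) = H $ k $ l" for k l
    using assms unfolding hermitian_def by (metis adj_mat_nth)
  have "cinner (H *v x) y = (\<Sum>k\<in>UNIV. \<Sum>l\<in>UNIV. H $ k $ l * x $ l * cnj (y $ k))"
    by (simp add: cinner_def matrix_vector_mult_def sum_distrib_right)
  also have "\<dots> = (\<Sum>l\<in>UNIV. \<Sum>k\<in>UNIV. H $ k $ l * x $ l * cnj (y $ k))"
    by (rule sum.swap)
  also have "\<dots> = cinner x (H *v y)"
    by (simp add: cinner_def matrix_vector_mult_def sum_distrib_left h mult_ac)
  finally show ?thesis .
qed

lemma hermitian_cinner_real: "hermitian H \<Longrightarrow> cinner (H *v x) x = of_real (Re (cinner (H *v x) x))"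
  by (metis cnj_cinner hermitian_cinner Reals_cnj_iff complex_is_Real_iff of_real_Re)

lemma exists_unit_orthogonal:
  fixes V :: "(complex^'n) set"
  assumes "finite V" "card V < CARD('n)"
  shows "\<exists>w. norm w = 1 \<and> (\<forall>u\<in>V. cinner w u = 0)"
proof -
  \<comment> \<open>real orthogonality to both u and i u is complex orthogonality to u\<close>
  define T where "T = V \<union> (\<lambda>u. \<i> *s u) ` V"
  have "card T \<le> card V + card V"
    unfolding T_def using card_Un_le card_image_le[OF assms(1)] by (meson add_left_mono order_trans)
  hence "card T < DIM(complex^'n)" using assms(2) by simp
  hence "span T \<noteq> UNIV"
    using assms(1) by (metis T_def dim_le_card dim_UNIV dim_span finite_Un finite_imageI
        linorder_not_le span_superset)
  then obtain a :: "complex^'n" where a: "a \<noteq> 0" "\<forall>x\<in>span T. a \<bullet> x = 0"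
    using span_not_UNIV_orthogonal by blast
  have "cinner a u = 0" if "u \<in> V" for u
  proof -
    have "u \<in> span T" "\<i> *s u \<in> span T" using that by (auto simp: T_def intro: span_base)
    hence "Re (cinner a u) = 0" "Im (cinner a u) = 0"
      using a(2) by (metis inner_eq_Re_cinner inner_ii_eq_Im_cinner)+
    thus ?thesis by (simp add: complex_eq_iff)
  qed
  hence "norm ((1 / norm a) *\<^sub>R a) = 1 \<and> (\<forall>u\<in>V. cinner ((1 / norm a) *\<^sub>R a) u = 0)"
    using a(1) by (simp add: cinner_scaleR_left)
  thus ?thesis by blast
qed

lemma nonneg_quadratic_bound_imp_zero:
  fixes Y c :: real
  assumes "Y \<ge> 0" and H: "\<And>t. t > 0 \<Longrightarrow> 2 * t * Y \<le> t\<^sup>2 * c"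
  shows "Y = 0"
proof (rule ccontr)
  assume "Y \<noteq> 0"
  hence Y: "Y > 0" using assms(1) by simp
  define t where "t = Y / (\<bar>c\<bar> + 1)"
  have t: "t > 0" using Y by (simp add: t_def add_pos_nonneg)
  have "t * (2 * Y) \<le> t * (t * c)" using H[OF t] by (simp add: power2_eq_square mult_ac)
  hence "2 * Y \<le> t * c" using t by simp
  also have "t * c \<le> t * \<bar>c\<bar>" using t by (simp add: mult_left_mono)
  also have "t * \<bar>c\<bar> < Y" using Y by (simp add: t_def field_simps)
  finally show False using Y by simp
qed

lemma rayleigh_perturbation:
  fixes H :: "complex^'n^'n"
  assumes herm: "hermitian H" and x: "norm x = 1"
  defines "y \<equiv> H *v x - of_real (Re (cinner (H *v x) x)) *s x"
  shows "(norm (x + t *\<^sub>R y))\<^sup>2 = 1 + t\<^sup>2 * (norm y)\<^sup>2"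
    and "Re (cinner (H *v (x + t *\<^sub>R y)) (x + t *\<^sub>R y)) =
           Re (cinner (H *v x) x) + 2 * t * (norm y)\<^sup>2 + t\<^sup>2 * Re (cinner (H *v y) y)"
proof -
  define \<mu> where "\<mu> = Re (cinner (H *v x) x)"
  have xx: "cinner x x = 1" using x by (simp add: cinner_self)
  have Hxx: "cinner (H *v x) x = of_real \<mu>"
    unfolding \<mu>_def by (rule hermitian_cinner_real[OF herm])
  have Hx: "H *v x = y + of_real \<mu> *s x" by (simp add: y_def \<mu>_def)
  have yx: "cinner y x = 0"
    by (simp add: y_def cinner_diff_left cinner_scale_left Hxx xx flip: \<mu>_def)
  hence xy: "cinner x y = 0" by (metis cnj_cinner complex_cnj_zero)
  have yy: "cinner y y = of_real ((norm y)\<^sup>2)" by (rule cinner_self)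
  have "cinner (x + t *\<^sub>R y) (x + t *\<^sub>R y) = of_real (1 + t\<^sup>2 * (norm y)\<^sup>2)"
    by (simp add: cinner_add_left cinner_add_right cinner_scaleR_left cinner_scaleR_right
        xx xy yx yy power2_eq_square)
  thus "(norm (x + t *\<^sub>R y))\<^sup>2 = 1 + t\<^sup>2 * (norm y)\<^sup>2"
    unfolding cinner_self of_real_eq_iff .
  have Hxy: "cinner (H *v x) y = of_real ((norm y)\<^sup>2)"
    unfolding Hx by (simp add: cinner_add_left cinner_scale_left xy yy)
  have Hyx: "cinner (H *v y) x = of_real ((norm y)\<^sup>2)"
    unfolding hermitian_cinner[OF herm] Hx by (simp add: cinner_add_right cinner_scale_right yx yy)
  have "cinner (H *v (x + t *\<^sub>R y)) (x + t *\<^sub>R y) =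
          cinner (H *v x) x + of_real t * cinner (H *v x) y
          + of_real t * cinner (H *v y) x + of_real t * of_real t * cinner (H *v y) y"
    by (simp add: matrix_vector_right_distrib matrix_vector_mult_scaleR cinner_add_left
        cinner_add_right cinner_scaleR_left cinner_scaleR_right algebra_simps)
  thus "Re (cinner (H *v (x + t *\<^sub>R y)) (x + t *\<^sub>R y)) =
          Re (cinner (H *v x) x) + 2 * t * (norm y)\<^sup>2 + t\<^sup>2 * Re (cinner (H *v y) y)"
    by (simp add: Hxx Hxy Hyx power2_eq_square)
qed

lemma rayleigh_maximizer_is_eigenvector:
  fixes H :: "complex^'n^'n"
  assumes herm: "hermitian H"
    and eig: "\<forall>u\<in>V. \<exists>c::real. H *v u = of_real c *s u"
    and x0: "norm x0 = 1" "\<forall>u\<in>V. cinner x0 u = 0"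
    and max: "\<And>z. norm z = 1 \<Longrightarrow> \<forall>u\<in>V. cinner z u = 0 \<Longrightarrow>
                   Re (cinner (H *v z) z) \<le> Re (cinner (H *v x0) x0)"
  shows "H *v x0 = of_real (Re (cinner (H *v x0) x0)) *s x0"
proof -
  define f where "f x = Re (cinner (H *v x) x)" for x
  define y where "y = H *v x0 - of_real (f x0) *s x0"
  have yV: "cinner y u = 0" if "u \<in> V" for u
  proof -
    from eig that obtain c where c: "H *v u = of_real c *s u" by blast
    have "cinner (H *v x0) u = cinner x0 (H *v u)" by (rule hermitian_cinner[OF herm])
    also have "\<dots> = 0" unfolding c cinner_scale_right using x0(2) that by simp
    finally show ?thesis using x0(2) that by (simp add: y_def cinner_diff_left cinner_scale_left)
  qed
  \<comment> \<open>moving from x0 towards y raises the Rayleigh quotient by 2 t |y|^2 to first order\<close>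
  have "2 * t * (norm y)\<^sup>2 \<le> t\<^sup>2 * (f x0 * (norm y)\<^sup>2 - f y)" if "t > 0" for t
  proof -
    define z where "z = x0 + t *\<^sub>R y"
    have z: "(norm z)\<^sup>2 = 1 + t\<^sup>2 * (norm y)\<^sup>2" "f z = f x0 + 2 * t * (norm y)\<^sup>2 + t\<^sup>2 * f y"
      using rayleigh_perturbation[OF herm x0(1), of t] unfolding z_def y_def f_def by simp_all
    have pos: "(norm z)\<^sup>2 > 0" unfolding z(1) by (simp add: add_pos_nonneg)
    hence "norm z \<noteq> 0" by auto
    moreover have "\<forall>u\<in>V. cinner z u = 0"
      using x0(2) yV by (simp add: z_def cinner_add_left cinner_scaleR_left)
    ultimately have "f ((1 / norm z) *\<^sub>R z) \<le> f x0"
      unfolding f_def by (intro max) (simp_all add: cinner_scaleR_left)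
    moreover have "f ((1 / norm z) *\<^sub>R z) = f z / (norm z)\<^sup>2"
      by (simp add: f_def matrix_vector_mult_scaleR cinner_scaleR_left cinner_scaleR_right
          power2_eq_square)
    ultimately have "f z \<le> f x0 * (1 + t\<^sup>2 * (norm y)\<^sup>2)"
      using pos unfolding z(1) by (simp add: divide_le_eq)
    thus ?thesis using z(2) by (simp add: algebra_simps)
  qed
  hence "(norm y)\<^sup>2 = 0" by (intro nonneg_quadratic_bound_imp_zero) auto
  thus ?thesis by (simp add: y_def f_def)
qed

lemma exists_orthogonal_eigenvector:
  fixes H :: "complex^'n^'n"
  assumes herm: "hermitian H" and "finite V" "card V < CARD('n)"
    and eig: "\<forall>u\<in>V. \<exists>c::real. H *v u = of_real c *s u"
  shows "\<exists>w \<mu>. norm w = 1 \<and> (\<forall>u\<in>V. cinner w u = 0) \<and> H *v w = of_real \<mu> *s w"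
proof -
  define W where "W = {x. \<forall>u\<in>V. cinner x u = 0}"
  define K where "K = sphere (0 :: complex^'n) 1 \<inter> W"
  have "W = (\<Inter>u\<in>V. {x. cinner x u = 0})" by (auto simp: W_def)
  moreover have "closed {x. cinner x u = 0}" for u
    unfolding cinner_def by (intro closed_Collect_eq continuous_intros)
  ultimately have "closed W" by auto
  hence K: "compact K" unfolding K_def by (rule compact_Int_closed[OF compact_sphere])
  have "K \<noteq> {}" using exists_unit_orthogonal[OF assms(2,3)] by (auto simp: K_def W_def)
  moreover have "continuous_on K (\<lambda>x. Re (cinner (H *v x) x))"
    unfolding cinner_def matrix_vector_mult_def by (intro continuous_intros)
  ultimately obtain x0 where x0: "x0 \<in> K"
    and max: "\<forall>z\<in>K. Re (cinner (H *v z) z) \<le> Re (cinner (H *v x0) x0)"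
    using continuous_attains_sup[OF K] by blast
  have "norm x0 = 1" "\<forall>u\<in>V. cinner x0 u = 0" using x0 by (simp_all add: K_def W_def)
  moreover have "H *v x0 = of_real (Re (cinner (H *v x0) x0)) *s x0"
    using herm eig calculation by (rule rayleigh_maximizer_is_eigenvector) (simp add: max K_def W_def)
  ultimately show ?thesis by blast
qed

lemma hermitian_orthonormal_eigenbasis:
  fixes H :: "complex^'n^'n"
  assumes herm: "hermitian H"
  shows "\<exists>(v :: 'n \<Rightarrow> complex^'n) l. (\<forall>i j. cinner (v i) (v j) = (if i = j then 1 else 0)) \<and>
      (\<forall>i. H *v v i = of_real (l i) *s v i)"
proof -
  have "\<exists>(v :: 'n \<Rightarrow> complex^'n) l.
      (\<forall>i\<in>S. \<forall>j\<in>S. cinner (v i) (v j) = (if i = j then 1 else 0)) \<and>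
      (\<forall>i\<in>S. H *v v i = of_real (l i) *s v i)" for S :: "'n set"
  proof (induction S rule: finite_induct[OF finite])
    case 1 thus ?case by simp
  next
    case (2 j S)
    then obtain v l where o: "\<forall>i\<in>S. \<forall>j\<in>S. cinner (v i) (v j) = (if i = j then 1 else 0)"
      and e: "\<forall>i\<in>S. H *v v i = of_real (l i) *s v i" by blast
    have "card (v ` S) \<le> card S" using 2(1) by (rule card_image_le)
    also have "card S < CARD('n)" using 2(2) by (intro psubset_card_mono) auto
    finally obtain w \<mu> where w: "norm w = 1" "\<forall>u\<in>v ` S. cinner w u = 0" "H *v w = of_real \<mu> *s w"
      using exists_orthogonal_eigenvector[OF herm, of "v ` S"] 2(1) e by blast
    have "cinner (v i) w = 0" if "i \<in> S" for i
      using w(2) that cnj_cinner[of w "v i"] by (metis complex_cnj_zero image_eqI)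
    moreover have "cinner w w = 1" using w(1) by (simp add: cinner_self)
    ultimately have "\<forall>i\<in>insert j S. \<forall>k\<in>insert j S.
        cinner ((v(j := w)) i) ((v(j := w)) k) = (if i = k then 1 else 0)"
      using o w(2) 2(2) by auto
    moreover have "\<forall>i\<in>insert j S. H *v (v(j := w)) i = of_real ((l(j := \<mu>)) i) *s (v(j := w)) i"
      using e w(3) 2(2) by auto
    ultimately show ?case by blast
  qed
  from this[of UNIV] show ?thesis by auto
qed

section \<open>Schmidt decomposition\<close>

definition diag_mat :: "('n \<Rightarrow> real) \<Rightarrow> complex^'n^'n" where
  "diag_mat s = (\<chi> i j. if i = j then of_real (s i) else 0)"

lemma matrix_mult_diag_mat_nth: "(A ** diag_mat l) $ a $ b = A $ a $ b * of_real (l b)"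
  by (simp add: matrix_matrix_mult_def diag_mat_def if_distrib sum.delta cong: if_cong)

lemma diag_mat_mult_nth: "(diag_mat l ** A) $ a $ b = of_real (l a) * A $ a $ b"
  by (simp add: matrix_matrix_mult_def diag_mat_def if_distrib[where f="\<lambda>x. x * _"] sum.delta
      cong: if_cong)

lemma diag_mat_mult_diag_mat: "diag_mat a ** diag_mat b = diag_mat (\<lambda>i. a i * b i)"
  by (simp add: vec_eq_iff diag_mat_mult_nth) (simp add: diag_mat_def)

lemma adj_mat_diag_mat [simp]: "adj_mat (diag_mat a) = diag_mat a"
  by (simp add: vec_eq_iff diag_mat_def)

lemma diag_mat_1: "diag_mat (\<lambda>i. 1) = mat 1"
  by (simp add: vec_eq_iff diag_mat_def mat_def)

lemma hermitian_unitary_diagonalization: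
  fixes H :: "complex^'n^'n"
  assumes "hermitian H"
  shows "\<exists>U l. unitary_mat U \<and> H ** U = U ** diag_mat l"
proof -
  obtain v :: "'n \<Rightarrow> complex^'n" and l
    where o: "\<forall>i j. cinner (v i) (v j) = (if i = j then 1 else 0)"
      and e: "\<forall>i. H *v v i = of_real (l i) *s v i"
    using hermitian_orthonormal_eigenbasis[OF assms] by blast
  define U :: "complex^'n^'n" where "U = (\<chi> k i. v i $ k)"
  have "(adj_mat U ** U) $ i $ j = cinner (v j) (v i)" for i j
    by (simp add: U_def matrix_matrix_mult_def cinner_def mult.commute)
  hence "unitary_mat U" using o by (intro unitary_matI) (simp add: vec_eq_iff mat_def)
  moreover have "(H ** U) $ k $ i = (H *v v i) $ k" for k i
    by (simp add: U_def matrix_matrix_mult_def matrix_vector_mult_def)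
  hence "H ** U = U ** diag_mat l"
    using e by (simp add: vec_eq_iff matrix_mult_diag_mat_nth U_def mult.commute)
  ultimately show ?thesis by blast
qed

lemma full_rank_right_inverse:
  fixes C :: "'a::field^'n^'n"
  assumes "rank C = CARD('n)"
  shows "\<exists>B. C ** B = mat 1"
proof -
  have "vec.dim (rows C) = CARD('n)" using assms by (simp add: row_rank_def_gen)
  hence "vec.span (rows C) = UNIV"
    by (metis vec.dim_eq_full vec.dim_subset_UNIV vec.span_UNIV vec_dim_card)
  then obtain B where "B ** C = mat 1" using matrix_left_invertible_span_rows_gen by blast
  thus ?thesis using matrix_left_right_inverse by blast
qed

lemma gram_diag_factorization:
  fixes X :: "complex^'n^'n"
  assumes XX: "X ** adj_mat X = diag_mat l" and B: "X ** B = mat 1"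
  shows "\<exists>W s. unitary_mat W \<and> (\<forall>i. 0 < s i) \<and> X = diag_mat s ** W"
proof -
  have l: "l i = (\<Sum>k\<in>UNIV. (cmod (X $ i $ k))\<^sup>2)" for i
  proof -
    have "complex_of_real (l i) = (X ** adj_mat X) $ i $ i" by (simp add: XX diag_mat_def)
    also have "\<dots> = of_real (\<Sum>k\<in>UNIV. (cmod (X $ i $ k))\<^sup>2)"
      by (simp only: of_real_sum matrix_matrix_mult_def vec_lambda_beta complex_norm_square adj_mat_nth)
    finally show ?thesis by (simp only: of_real_eq_iff)
  qed
  have lpos: "0 < l i" for i
  proof (rule ccontr)
    assume "\<not> 0 < l i"
    hence "(\<Sum>k\<in>UNIV. (cmod (X $ i $ k))\<^sup>2) = 0"
      using l[of i] by (simp add: sum_nonneg order.antisym)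
    hence "\<forall>k. X $ i $ k = 0" by (simp add: sum_nonneg_eq_0_iff)
    hence "(X ** B) $ i $ i = 0" by (simp add: matrix_matrix_mult_def)
    thus False using B by (simp add: mat_def)
  qed
  define s where "s i = sqrt (l i)" for i
  have spos: "0 < s i" for i using lpos by (simp add: s_def)
  have inv_s: "1 / s i * l i * (1 / s i) = 1" "s i * (1 / s i) = 1" for i
    using lpos[of i] by (simp_all add: s_def field_simps)
  define W where "W = diag_mat (\<lambda>i. 1 / s i) ** X"
  have "W ** adj_mat W = diag_mat (\<lambda>i. 1 / s i) ** (X ** adj_mat X) ** diag_mat (\<lambda>i. 1 / s i)"
    by (simp add: W_def adj_mat_mult matrix_mul_assoc)
  also have "\<dots> = diag_mat (\<lambda>i. 1 / s i * l i * (1 / s i))"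
    by (simp only: XX diag_mat_mult_diag_mat)
  finally have "unitary_mat W"
    by (intro unitary_matI') (simp only: inv_s diag_mat_1)
  moreover have "diag_mat s ** W = diag_mat (\<lambda>i. s i * (1 / s i)) ** X"
    by (simp only: W_def matrix_mul_assoc diag_mat_mult_diag_mat)
  hence "diag_mat s ** W = X" by (simp only: inv_s diag_mat_1 matrix_mul_lid)
  ultimately show ?thesis using spos by metis
qed

lemma schmidt_decomposition:
  fixes C :: "complex^'n^'n"
  assumes "rank C = CARD('n)"
  shows "\<exists>U V s. unitary_mat U \<and> unitary_mat V \<and> (\<forall>i. 0 < s i) \<and> C = local_apply U V (diag_mat s)"
proof -
  have "hermitian (C ** adj_mat C)" by (simp add: hermitian_def adj_mat_mult)
  then obtain U l where U: "unitary_mat U" and HU: "C ** adj_mat C ** U = U ** diag_mat l"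
    using hermitian_unitary_diagonalization by blast
  define X where "X = adj_mat U ** C"
  have "X ** adj_mat X = adj_mat U ** (C ** adj_mat C ** U)"
    by (simp add: X_def adj_mat_mult matrix_mul_assoc)
  also have "\<dots> = adj_mat U ** U ** diag_mat l" by (simp add: HU matrix_mul_assoc)
  also have "\<dots> = diag_mat l" using U by (simp add: unitary_mat_def)
  finally have XX: "X ** adj_mat X = diag_mat l" .
  obtain B where CB: "C ** B = mat 1" using full_rank_right_inverse[OF assms] by blast
  have "X ** (B ** U) = adj_mat U ** (C ** B) ** U"
    by (simp add: X_def matrix_mul_assoc)
  hence "X ** (B ** U) = mat 1" using U CB by (simp add: unitary_mat_def)
  with XX obtain W s where W: "unitary_mat W" and s: "\<forall>i. 0 < s i" and X: "X = diag_mat s ** W"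
    using gram_diag_factorization by blast
  have "C = U ** X" using U unfolding unitary_mat_def X_def by (metis matrix_mul_assoc matrix_mul_lid)
  also have "\<dots> = local_apply U (transpose W) (diag_mat s)"
    by (simp add: X local_apply_eq_mult matrix_mul_assoc)
  finally show ?thesis using U W s unitary_mat_transpose by blast
qed

lemma trace_mult_adj_mat: "trace (C ** adj_mat C) = of_real (\<Sum>a\<in>UNIV. \<Sum>b\<in>UNIV. (cmod (C $ a $ b))\<^sup>2)"
  by (simp only: trace_def of_real_sum matrix_matrix_mult_def vec_lambda_beta complex_norm_square
      adj_mat_nth)

lemma normalized_iff_trace: "normalized C \<longleftrightarrow> trace (C ** adj_mat C) = 1"
  by (simp only: normalized_def trace_mult_adj_mat of_real_eq_1_iff)

lemma local_apply_mult_adj_mat: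
  fixes X :: "complex^'n^'n"
  assumes "unitary_mat V"
  shows "local_apply U V X ** adj_mat (local_apply U V X) = U ** (X ** adj_mat X) ** adj_mat U"
proof -
  have "transpose V ** adj_mat (transpose V) = mat 1"
    using assms by (simp add: adj_mat_transpose unitary_mat_def flip: matrix_transpose_mul)
  thus ?thesis
    by (simp add: local_apply_eq_mult adj_mat_mult matrix_mul_assoc)
      (simp flip: matrix_mul_assoc)
qed

lemma normalized_local_apply_iff:
  fixes X :: "complex^'n^'n"
  assumes "unitary_mat U" "unitary_mat V"
  shows "normalized (local_apply U V X) \<longleftrightarrow> normalized X"
proof -
  have "trace (U ** (X ** adj_mat X) ** adj_mat U) = trace ((X ** adj_mat X) ** (adj_mat U ** U))"
    by (metis trace_mul_sym matrix_mul_assoc)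
  thus ?thesis
    using assms by (simp add: normalized_iff_trace local_apply_mult_adj_mat unitary_mat_def)
qed

lemma LU_equiv_normalized_iff: "LU_equiv X (Y :: complex^'n^'n) \<Longrightarrow> normalized X \<longleftrightarrow> normalized Y"
  unfolding LU_equiv_def using normalized_local_apply_iff by blast

lemma normalized_diag_mat_iff: "normalized (diag_mat s) \<longleftrightarrow> (\<Sum>i\<in>UNIV. (s i)\<^sup>2) = 1"
proof -
  have "(\<Sum>b\<in>UNIV. (cmod (diag_mat s $ a $ b))\<^sup>2) = (s a)\<^sup>2" for a
    by (simp add: diag_mat_def if_distrib[where f="\<lambda>x. (cmod x)\<^sup>2"] sum.delta cong: if_cong)
  thus ?thesis by (simp add: normalized_def)
qed

lemma schmidt_normal_form:
  fixes C :: "complex^'n^'n"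
  assumes "normalized C" "schmidt_rank C = CARD('n)"
  obtains s where "\<forall>i. 0 < s i" "(\<Sum>i\<in>UNIV. (s i)\<^sup>2) = 1" "LU_equiv (diag_mat s) C"
proof -
  obtain U V s where "unitary_mat U" "unitary_mat V" and s: "\<forall>i. 0 < s i"
    and "C = local_apply U V (diag_mat s)"
    using schmidt_decomposition assms(2) unfolding schmidt_rank_def by blast
  hence LU: "LU_equiv (diag_mat s) C" by (simp add: LU_equivI)
  hence "normalized (diag_mat s)" using assms(1) LU_equiv_normalized_iff by blast
  hence "(\<Sum>i\<in>UNIV. (s i)\<^sup>2) = 1" by (simp add: normalized_diag_mat_iff)
  thus thesis using that s LU by blast
qed

section \<open>The multiset of Schmidt coefficients is a complete LU invariant\<close>

definition value_mset :: "('a::finite \<Rightarrow> 'b) \<Rightarrow> 'b multiset" where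
  "value_mset f = image_mset f (mset_set UNIV)"

lemma size_value_mset [simp]:
  fixes f :: "'a::finite \<Rightarrow> 'b"
  shows "size (value_mset f) = CARD('a)"
  by (simp add: value_mset_def)

lemma set_mset_value_mset [simp]: "set_mset (value_mset f) = range f"
  by (simp add: value_mset_def)

lemma sum_mset_value_mset: "sum_mset (value_mset f) = (\<Sum>i\<in>UNIV. f i)"
  by (simp add: value_mset_def sum_unfold_sum_mset)

lemma image_mset_value_mset: "image_mset h (value_mset f) = value_mset (\<lambda>i. h (f i))"
  by (simp add: value_mset_def multiset.map_comp comp_def)

lemma value_mset_eq_sum: "value_mset f = (\<Sum>i\<in>UNIV. {#f i#})"
  by (simp add: value_mset_def sum_unfold_sum_mset)

lemma count_value_mset: "count (value_mset f) x = card {i. f i = x}"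
  by (simp add: value_mset_def count_image_mset vimage_def)

lemma value_mset_eq_iff: "value_mset f = value_mset g \<longleftrightarrow> (\<forall>x. card {i. f i = x} = card {i. g i = x})"
  by (simp add: multiset_eq_iff count_value_mset)

lemma unitary_row_norm:
  assumes "unitary_mat (Q :: complex^'n^'n)"
  shows "(\<Sum>j\<in>UNIV. (cmod (Q $ i $ j))\<^sup>2) = 1"
proof -
  have "complex_of_real (\<Sum>j\<in>UNIV. (cmod (Q $ i $ j))\<^sup>2) = (Q ** adj_mat Q) $ i $ i"
    by (simp only: of_real_sum matrix_matrix_mult_def vec_lambda_beta complex_norm_square adj_mat_nth)
  also have "\<dots> = 1" using assms by (simp add: unitary_mat_def mat_def)
  finally show ?thesis by (simp only: of_real_eq_1_iff)
qed

lemma unitary_col_norm: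
  assumes "unitary_mat (Q :: complex^'n^'n)"
  shows "(\<Sum>i\<in>UNIV. (cmod (Q $ i $ j))\<^sup>2) = 1"
  using unitary_row_norm[OF unitary_mat_adj[OF assms], of j] by simp

text \<open>Double counting with the doubly stochastic matrix of the squared moduli of Q.\<close>
lemma unitary_support_card_le:
  fixes Q :: "complex^'n^'n" and f g :: "'n \<Rightarrow> 'a"
  assumes Q: "unitary_mat Q" and supp: "\<And>i j. Q $ i $ j \<noteq> 0 \<Longrightarrow> f i = g j"
  shows "card {i. f i = x} \<le> card {j. g j = x}"
proof -
  let ?I = "{i. f i = x}" and ?J = "{j. g j = x}" and ?q = "\<lambda>i j. (cmod (Q $ i $ j))\<^sup>2"
  have "real (card ?I) = (\<Sum>i\<in>?I. \<Sum>j\<in>UNIV. ?q i j)" using unitary_row_norm[OF Q] by simp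
  also have "\<dots> = (\<Sum>i\<in>?I. \<Sum>j\<in>?J. ?q i j)"
    using supp by (intro sum.cong refl sum.mono_neutral_right) force+
  also have "\<dots> = (\<Sum>j\<in>?J. \<Sum>i\<in>?I. ?q i j)" by (rule sum.swap)
  also have "\<dots> \<le> (\<Sum>j\<in>?J. \<Sum>i\<in>UNIV. ?q i j)" by (intro sum_mono sum_mono2) auto
  also have "\<dots> = real (card ?J)" using unitary_col_norm[OF Q] by simp
  finally show ?thesis by simp
qed

lemma LU_equiv_diag_mat_imp_value_mset_eq:
  assumes "LU_equiv (diag_mat s) (diag_mat t)" and s: "\<forall>i. 0 \<le> s i" and t: "\<forall>i. 0 \<le> t i"
  shows "value_mset s = value_mset t"
proof -
  obtain Q R where Q: "unitary_mat Q" and R: "unitary_mat R"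
    and eq: "local_apply Q R (diag_mat s) = diag_mat t"
    using assms(1) unfolding LU_equiv_def by blast
  have "diag_mat t ** adj_mat (diag_mat t) = Q ** (diag_mat s ** adj_mat (diag_mat s)) ** adj_mat Q"
    unfolding eq[symmetric] local_apply_mult_adj_mat[OF R] ..
  hence "diag_mat (\<lambda>i. (t i)\<^sup>2) ** Q = Q ** diag_mat (\<lambda>i. (s i)\<^sup>2) ** (adj_mat Q ** Q)"
    by (simp add: diag_mat_mult_diag_mat matrix_mul_assoc power2_eq_square)
  hence E: "diag_mat (\<lambda>i. (t i)\<^sup>2) ** Q = Q ** diag_mat (\<lambda>i. (s i)\<^sup>2)"
    using Q by (simp add: unitary_mat_def)
  have supp: "t i = s j" if "Q $ i $ j \<noteq> 0" for i j
  proof -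
    have "complex_of_real ((t i)\<^sup>2) * Q $ i $ j = Q $ i $ j * complex_of_real ((s j)\<^sup>2)"
      using arg_cong[OF E, of "\<lambda>M. M $ i $ j"]
      by (simp only: diag_mat_mult_nth matrix_mult_diag_mat_nth)
    hence "complex_of_real ((t i)\<^sup>2) = complex_of_real ((s j)\<^sup>2)"
      using that by (simp only: mult.commute mult_cancel_left) simp
    hence "(t i)\<^sup>2 = (s j)\<^sup>2" by (simp only: of_real_eq_iff)
    thus ?thesis using s t by (simp add: power2_eq_iff_nonneg)
  qed
  have "card {i. t i = x} \<le> card {j. s j = x}" for x
    by (rule unitary_support_card_le[OF Q]) (use supp in auto)
  moreover have "card {j. s j = x} \<le> card {i. t i = x}" for x
    by (rule unitary_support_card_le[OF unitary_mat_adj[OF Q]]) (use supp in auto)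
  ultimately show ?thesis by (simp add: value_mset_eq_iff order.antisym)
qed

definition perm_mat :: "('n \<Rightarrow> 'n) \<Rightarrow> complex^'n^'n" where
  "perm_mat \<pi> = (\<chi> i j. if j = \<pi> i then 1 else 0)"

lemma perm_mat_mult_nth:
  "(perm_mat \<pi> ** A) $ i $ j = A $ \<pi> i $ j"
  by (simp add: perm_mat_def matrix_matrix_mult_def if_distrib[where f="\<lambda>x. x * _"] sum.delta'
      cong: if_cong)

lemma unitary_perm_mat:
  assumes "inj \<pi>"
  shows "unitary_mat (perm_mat \<pi>)"
proof (rule unitary_matI')
  have "adj_mat (perm_mat \<pi>) $ k $ j = (if k = \<pi> j then 1 else 0)" for k j
    by (simp add: perm_mat_def)
  thus "perm_mat \<pi> ** adj_mat (perm_mat \<pi>) = mat 1"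
    using assms by (simp add: vec_eq_iff perm_mat_mult_nth mat_def inj_eq)
qed

lemma matrix_mult_transpose_perm_mat_nth:
  "(A ** transpose (perm_mat \<pi>)) $ i $ j = A $ i $ \<pi> j"
  by (simp add: perm_mat_def transpose_def matrix_matrix_mult_def if_distrib sum.delta' cong: if_cong)

lemma local_apply_perm_mat_diag_mat:
  assumes "inj \<pi>"
  shows "local_apply (perm_mat \<pi>) (perm_mat \<pi>) (diag_mat s) = diag_mat (\<lambda>i. s (\<pi> i))"
  using assms by (simp add: vec_eq_iff local_apply_eq_mult matrix_mult_transpose_perm_mat_nth
      perm_mat_mult_nth diag_mat_def inj_eq)

lemma value_mset_eq_imp_LU_equiv_diag_mat:
  assumes "value_mset s = value_mset t"
  shows "LU_equiv (diag_mat s) (diag_mat t)"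
proof -
  obtain \<pi> where \<pi>: "\<pi> permutes UNIV" "\<forall>i. t i = s (\<pi> i)"
    using image_mset_eq_implies_permutes[of UNIV t s] assms by (auto simp: value_mset_def)
  hence "t = (\<lambda>i. s (\<pi> i))" by auto
  thus ?thesis using \<pi>(1)
    using LU_equivI[OF unitary_perm_mat unitary_perm_mat, of \<pi> \<pi> "diag_mat s"]
    by (simp add: permutes_inj local_apply_perm_mat_diag_mat)
qed

lemma LU_equiv_if_schmidt_coeffs_eq:
  "LU_equiv (diag_mat s) C \<Longrightarrow> LU_equiv (diag_mat t) D \<Longrightarrow> value_mset s = value_mset t \<Longrightarrow>
   LU_equiv C D"
  by (meson value_mset_eq_imp_LU_equiv_diag_mat LU_equiv_sym LU_equiv_trans)

section \<open>Tensor products of states\<close>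

lemma state_tensor_mult:
  "state_tensor A B ** state_tensor C D = state_tensor (A ** C) (B ** (D :: complex^'n^'n))"
proof -
  have "(\<Sum>r\<in>UNIV. A $ fst p $ fst r * B $ snd p $ snd r * (C $ fst r $ fst q * D $ snd r $ snd q)) =
        (\<Sum>r1\<in>UNIV. A $ fst p $ r1 * C $ r1 $ fst q) *
        (\<Sum>r2\<in>UNIV. B $ snd p $ r2 * D $ r2 $ snd q)"
    for p q :: "'n \<times> 'n"
    by (simp add: sum_product mult_ac sum.cartesian_product split_def flip: UNIV_Times_UNIV)
  thus ?thesis by (simp add: vec_eq_iff matrix_matrix_mult_def state_tensor_def)
qed

lemma adj_mat_state_tensor: "adj_mat (state_tensor A B) = state_tensor (adj_mat A) (adj_mat B)"
  by (simp add: vec_eq_iff state_tensor_def)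

lemma transpose_state_tensor:
  "transpose (state_tensor A B) = state_tensor (transpose A) (transpose B)"
  by (simp add: vec_eq_iff state_tensor_def transpose_def)

lemma state_tensor_mat_1: "state_tensor (mat 1) (mat 1) = (mat 1 :: complex^('n::finite \<times> 'n)^('n \<times> 'n))"
  by (auto simp add: vec_eq_iff state_tensor_def mat_def prod_eq_iff)

lemma unitary_state_tensor:
  "unitary_mat A \<Longrightarrow> unitary_mat B \<Longrightarrow> unitary_mat (state_tensor A B)"
  by (rule unitary_matI)
    (simp add: adj_mat_state_tensor state_tensor_mult unitary_mat_def state_tensor_mat_1)

lemma state_tensor_local_apply:
  "state_tensor (local_apply U1 V1 X1) (local_apply U2 V2 X2) =
   local_apply (state_tensor U1 U2) (state_tensor V1 V2) (state_tensor X1 (X2 :: complex^'n^'n))"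
  by (simp add: local_apply_eq_mult state_tensor_mult transpose_state_tensor)

lemma state_tensor_diag_mat:
  "state_tensor (diag_mat s) (diag_mat t) = diag_mat (\<lambda>k. s (fst k) * t (snd k))"
  by (auto simp add: vec_eq_iff state_tensor_def diag_mat_def prod_eq_iff)

lemma LU_equiv_state_tensor:
  assumes "LU_equiv X X'" "LU_equiv Y (Y' :: complex^'n^'n)"
  shows "LU_equiv (state_tensor X Y) (state_tensor X' Y')"
  using assms unfolding LU_equiv_def by (metis state_tensor_local_apply unitary_state_tensor)

section \<open>Factoring multisets of pairwise products\<close>

definition pairwise_mset :: "('a \<Rightarrow> 'b \<Rightarrow> 'c) \<Rightarrow> 'a multiset \<Rightarrow> 'b multiset \<Rightarrow> 'c multiset" where
  "pairwise_mset f A B = (\<Sum>x\<in>#A. image_mset (f x) B)"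

lemma pairwise_mset_empty [simp]: "pairwise_mset f {#} B = {#}"
  by (simp add: pairwise_mset_def)

lemma pairwise_mset_add_mset [simp]:
  "pairwise_mset f (add_mset a A) B = image_mset (f a) B + pairwise_mset f A B"
  by (simp add: pairwise_mset_def)

lemma image_mset_pairwise_mset:
  "image_mset h (pairwise_mset f A B) = pairwise_mset (\<lambda>x y. h (f x y)) A B"
  by (induction A) (simp_all add: multiset.map_comp comp_def)

lemma pairwise_mset_image_mset:
  "pairwise_mset f (image_mset g A) (image_mset k B) = pairwise_mset (\<lambda>x y. f (g x) (k y)) A B"
  by (induction A) (simp_all add: multiset.map_comp comp_def)

lemma pairwise_mset_cong:
  assumes "\<And>x y. x \<in># A \<Longrightarrow> y \<in># B \<Longrightarrow> f x y = g x y"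
  shows "pairwise_mset f A B = pairwise_mset g A B"
  using assms by (induction A) (auto intro!: image_mset_cong)

lemma two_mset_eq_iff: "{#a, b#} = {#c, d#} \<longleftrightarrow> (a = c \<and> b = d) \<or> (a = d \<and> b = c)"
  by (auto simp: add_eq_conv_diff)

lemma mset_size_2_gaps:
  fixes A :: "real multiset"
  assumes "size A = 2"
  obtains a p where "A = {#a, a - p#}" "0 \<le> p"
proof -
  have "length (sorted_list_of_multiset A) = 2"
    using assms by (metis mset_sorted_list_of_multiset size_mset)
  then obtain y x where l: "sorted_list_of_multiset A = [y, x]"
    by (auto simp: numeral_2_eq_2 length_Suc_conv)
  hence "y \<le> x" by (metis sorted2 sorted_sorted_list_of_multiset)
  moreover have "A = {#x, y#}"
    using mset_sorted_list_of_multiset[of A] l by (simp add: add_mset_commute)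
  ultimately show ?thesis using that[of x "x - y"] by simp
qed

lemma mset_size_3_gaps:
  fixes A :: "real multiset"
  assumes "size A = 3"
  obtains a p q where "A = {#a, a - p, a - q#}" "0 \<le> p" "p \<le> q"
proof -
  have "length (sorted_list_of_multiset A) = 3"
    using assms by (metis mset_sorted_list_of_multiset size_mset)
  then obtain z y x where l: "sorted_list_of_multiset A = [z, y, x]"
    by (auto simp: numeral_3_eq_3 length_Suc_conv)
  hence "z \<le> y" "y \<le> x" by (metis sorted2 sorted_sorted_list_of_multiset)+
  moreover have "A = {#x, y, z#}"
    using mset_sorted_list_of_multiset[of A] l by (simp add: add_mset_commute)
  ultimately show ?thesis using that[of x "x - y" "x - z"] by simp
qed

lemma gap_sums_2_eq:
  fixes p r p' r' :: real
  assumes nonneg: "0 \<le> p" "0 \<le> r" "0 \<le> p'" "0 \<le> r'"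
    and D: "{#0, p, r, p + r#} = {#0, p', r', p' + r'#}"
  shows "(p = p' \<and> r = r') \<or> (p = r' \<and> r = p')"
proof -
  have "p + r \<in># {#0, p', r', p' + r'#}" unfolding D[symmetric] by simp
  moreover have "p' + r' \<in># {#0, p, r, p + r#}" unfolding D by simp
  ultimately have "p + r \<le> p' + r'" "p' + r' \<le> p + r" using nonneg by auto
  hence "p' + r' = p + r" by simp
  hence "{#p, r#} = {#p', r'#}" using D by (simp add: add_mset_commute)
  thus ?thesis by (simp add: two_mset_eq_iff)
qed

lemma pairwise_plus_size_2_eq:
  fixes A B C E :: "real multiset"
  assumes "size A = 2" "size B = 2" "size C = 2" "size E = 2"
    and eq: "pairwise_mset (+) A B = pairwise_mset (+) C E"
  shows "\<exists>t. (A = image_mset ((+) t) C \<and> E = image_mset ((+) t) B) \<or>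
             (A = image_mset ((+) t) E \<and> C = image_mset ((+) t) B)"
proof -
  obtain a p where A: "A = {#a, a - p#}" "0 \<le> p" using mset_size_2_gaps assms(1) .
  obtain b r where B: "B = {#b, b - r#}" "0 \<le> r" using mset_size_2_gaps assms(2) .
  obtain c p' where C: "C = {#c, c - p'#}" "0 \<le> p'" using mset_size_2_gaps assms(3) .
  obtain e r' where E: "E = {#e, e - r'#}" "0 \<le> r'" using mset_size_2_gaps assms(4) .
  have "a + b \<in># pairwise_mset (+) C E" unfolding eq[symmetric] A B by simp
  hence "a + b \<le> c + e" using C E by auto
  moreover have "c + e \<in># pairwise_mset (+) A B" unfolding eq C E by simp
  hence "c + e \<le> a + b" using A B by auto
  ultimately have e: "e = a + b - c" by simp
  have "image_mset (\<lambda>x. a + b - x) (pairwise_mset (+) A B) =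
        image_mset (\<lambda>x. a + b - x) (pairwise_mset (+) C E)"
    by (simp only: eq)
  hence "{#0, p, r, p + r#} = {#0, p', r', p' + r'#}"
    unfolding A B C E e by (simp add: algebra_simps add_mset_commute)
  with A B C E have "(p = p' \<and> r = r') \<or> (p = r' \<and> r = p')"
    by (intro gap_sums_2_eq) auto
  thus ?thesis
  proof
    assume "p = p' \<and> r = r'"
    hence "A = image_mset ((+) (a - c)) C \<and> E = image_mset ((+) (a - c)) B"
      using A B C E e by (simp add: algebra_simps)
    thus ?thesis by blast
  next
    assume "p = r' \<and> r = p'"
    hence "A = image_mset ((+) (c - b)) E \<and> C = image_mset ((+) (c - b)) B"
      using A B C E e by (simp add: algebra_simps)
    thus ?thesis by blast
  qed
qed

lemma gap_sums_3_residual_eq: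
  fixes p q r s q' s' :: real
  assumes o: "0 \<le> p" "p \<le> q" "p \<le> r" "r \<le> s" "p \<le> q'" "r \<le> s'"
    and qs: "q + s = q' + s'"
    and M: "{#q, s, p + s, q + r#} = {#q', s', p + s', q' + r#}"
  shows "(q = q' \<and> s = s') \<or> (p = r \<and> q = s' \<and> s = q')"
proof -
  have "q' \<in># {#q, s, p + s, q + r#}" using M by simp
  then consider "q' = q" | "q' = s" | "q' = p + s" | "q' = q + r" by auto
  thus ?thesis
  proof cases
    case 1
    thus ?thesis using qs by simp
  next
    case 2
    hence s': "s' = q" using qs by simp
    have "{#p + s, q + r#} = {#p + q, s + r#}"
      using M unfolding 2 s' by (simp add: add_mset_commute)
    thus ?thesis using 2 s' unfolding two_mset_eq_iff by argo
  next
    case 3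
    hence s': "s' = q - p" using qs by simp
    have "{#s, q + r#} = {#q - p, p + s + r#}"
      using M unfolding 3 s' by (simp add: add_mset_commute)
    thus ?thesis using 3 s' o unfolding two_mset_eq_iff by smt
  next
    case 4
    hence s': "s' = s - r" using qs by simp
    have M': "{#q, s, p + s#} = {#s - r, p + (s - r), q + r + r#}"
      using M unfolding 4 s' by (simp add: add_mset_commute)
    show ?thesis
    proof (cases "r = 0")
      case True
      thus ?thesis using 4 s' by simp
    next
      case False
      have "s \<in># {#s - r, p + (s - r), q + r + r#}" using M'[symmetric] by simp
      hence "p = r \<or> s = q + r + r" using False by auto
      thus ?thesis
      proof
        assume pr: "p = r"
        have "{#q, p + s#} = {#s - r, q + r + r#}"
          using M' unfolding pr by (simp add: add_mset_commute)
        thus ?thesis using 4 s' pr False unfolding two_mset_eq_iff by smt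
      next
        assume hs: "s = q + r + r"
        have "{#q, p + s#} = {#s - r, p + (s - r)#}"
          using M' unfolding hs by (simp add: add_mset_commute)
        thus ?thesis using hs False o unfolding two_mset_eq_iff by smt
      qed
    qed
  qed
qed

lemma gap_sums_3_eq_ordered:
  fixes p q r s p' q' r' s' :: real
  assumes o: "0 \<le> p" "p \<le> q" "p \<le> r" "r \<le> s" "0 \<le> p'" "p' \<le> q'" "p' \<le> r'" "r' \<le> s'"
    and D: "{#0, p, q, r, s, p + r, p + s, q + r, q + s#} =
            {#0, p', q', r', s', p' + r', p' + s', q' + r', q' + s'#}"
  shows "(p = p' \<and> q = q' \<and> r = r' \<and> s = s') \<or> (p = r' \<and> q = s' \<and> r = p' \<and> s = q')"
proof -
  have D0: "{#p, q, r, s, p + r, p + s, q + r, q + s#} =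
            {#p', q', r', s', p' + r', p' + s', q' + r', q' + s'#}"
    using D by simp
  have "p \<in># {#p', q', r', s', p' + r', p' + s', q' + r', q' + s'#}" unfolding D0[symmetric] by simp
  moreover have "p' \<in># {#p, q, r, s, p + r, p + s, q + r, q + s#}" unfolding D0 by simp
  ultimately have pp: "p' = p" using o by auto
  have "q + s \<in># {#0, p', q', r', s', p' + r', p' + s', q' + r', q' + s'#}" unfolding D[symmetric] by simp
  moreover have "q' + s' \<in># {#0, p, q, r, s, p + r, p + s, q + r, q + s#}" unfolding D by simp
  ultimately have qs: "q' + s' = q + s" using o by auto
  \<comment> \<open>every variable occurs three times among the nine sums\<close>
  have "sum_mset {#0, p, q, r, s, p + r, p + s, q + r, q + s#} =
        sum_mset {#0, p', q', r', s', p' + r', p' + s', q' + r', q' + s'#}"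
    using D by simp
  hence rr: "r' = r" using pp qs by simp
  have "{#q, s, p + s, q + r#} = {#q', s', p + s', q' + r#}"
    using D0 unfolding pp rr by (simp add: add_mset_commute qs)
  hence "(q = q' \<and> s = s') \<or> (p = r \<and> q = s' \<and> s = q')"
    using o pp rr qs by (intro gap_sums_3_residual_eq) simp_all
  thus ?thesis using pp rr by auto
qed

lemma gap_sums_3_eq:
  fixes p q r s p' q' r' s' :: real
  assumes o: "0 \<le> p" "p \<le> q" "0 \<le> r" "r \<le> s" "0 \<le> p'" "p' \<le> q'" "0 \<le> r'" "r' \<le> s'"
    and D: "{#0, p, q, r, s, p + r, p + s, q + r, q + s#} =
            {#0, p', q', r', s', p' + r', p' + s', q' + r', q' + s'#}"
  shows "(p = p' \<and> q = q' \<and> r = r' \<and> s = s') \<or> (p = r' \<and> q = s' \<and> r = p' \<and> s = q')"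
proof -
  have swap: "{#0, p, q, r, s, p + r, p + s, q + r, q + s#} =
              {#0, r, s, p, q, r + p, r + q, s + p, s + q#}" for p q r s :: real
    by (simp add: add_mset_commute add.commute)
  note ordered = gap_sums_3_eq_ordered[of _ _ _ _ _ _ _ _, rotated 8]
  consider "p \<le> r" "p' \<le> r'" | "p \<le> r" "r' \<le> p'" | "r \<le> p" "p' \<le> r'" | "r \<le> p" "r' \<le> p'"
    by linarith
  thus ?thesis
  proof cases
    case 1
    show ?thesis by (rule ordered[OF D]) (use o 1 in linarith)+
  next
    case 2
    have "(p = r' \<and> q = s' \<and> r = p' \<and> s = q') \<or> (p = p' \<and> q = q' \<and> r = r' \<and> s = s')"
      by (rule ordered[OF D[unfolded swap[of p' q' r' s']]]) (use o 2 in linarith)+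
    thus ?thesis by auto
  next
    case 3
    have "(r = p' \<and> s = q' \<and> p = r' \<and> q = s') \<or> (r = r' \<and> s = s' \<and> p = p' \<and> q = q')"
      by (rule ordered[OF D[unfolded swap[of p q r s]]]) (use o 3 in linarith)+
    thus ?thesis by auto
  next
    case 4
    have "(r = r' \<and> s = s' \<and> p = p' \<and> q = q') \<or> (r = p' \<and> s = q' \<and> p = r' \<and> q = s')"
      by (rule ordered[OF D[unfolded swap[of p q r s] swap[of p' q' r' s']]]) (use o 4 in linarith)+
    thus ?thesis by auto
  qed
qed

lemma pairwise_plus_size_3_eq:
  fixes A B C E :: "real multiset"
  assumes "size A = 3" "size B = 3" "size C = 3" "size E = 3"
    and eq: "pairwise_mset (+) A B = pairwise_mset (+) C E"
  shows "\<exists>t. (A = image_mset ((+) t) C \<and> E = image_mset ((+) t) B) \<or>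
             (A = image_mset ((+) t) E \<and> C = image_mset ((+) t) B)"
proof -
  obtain a p q where A: "A = {#a, a - p, a - q#}" "0 \<le> p" "p \<le> q"
    using mset_size_3_gaps assms(1) .
  obtain b r s where B: "B = {#b, b - r, b - s#}" "0 \<le> r" "r \<le> s"
    using mset_size_3_gaps assms(2) .
  obtain c p' q' where C: "C = {#c, c - p', c - q'#}" "0 \<le> p'" "p' \<le> q'"
    using mset_size_3_gaps assms(3) .
  obtain e r' s' where E: "E = {#e, e - r', e - s'#}" "0 \<le> r'" "r' \<le> s'"
    using mset_size_3_gaps assms(4) .
  have "a + b \<in># pairwise_mset (+) C E" unfolding eq[symmetric] A B by simp
  hence "a + b \<le> c + e" using C E by auto
  moreover have "c + e \<in># pairwise_mset (+) A B" unfolding eq C E by simp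
  hence "c + e \<le> a + b" using A B by auto
  ultimately have e: "e = a + b - c" by simp
  have "image_mset (\<lambda>x. a + b - x) (pairwise_mset (+) A B) =
        image_mset (\<lambda>x. a + b - x) (pairwise_mset (+) C E)"
    by (simp only: eq)
  hence "{#0, p, q, r, s, p + r, p + s, q + r, q + s#} =
         {#0, p', q', r', s', p' + r', p' + s', q' + r', q' + s'#}"
    unfolding A B C E e by (simp add: algebra_simps add_mset_commute)
  with A B C E have "(p = p' \<and> q = q' \<and> r = r' \<and> s = s') \<or> (p = r' \<and> q = s' \<and> r = p' \<and> s = q')"
    by (intro gap_sums_3_eq) auto
  thus ?thesis
  proof
    assume "p = p' \<and> q = q' \<and> r = r' \<and> s = s'"
    hence "A = image_mset ((+) (a - c)) C \<and> E = image_mset ((+) (a - c)) B"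
      using A B C E e by (simp add: algebra_simps)
    thus ?thesis by blast
  next
    assume "p = r' \<and> q = s' \<and> r = p' \<and> s = q'"
    hence "A = image_mset ((+) (c - b)) E \<and> C = image_mset ((+) (c - b)) B"
      using A B C E e by (simp add: algebra_simps)
    thus ?thesis by blast
  qed
qed

lemma ln_pairwise_times:
  fixes A B :: "real multiset"
  assumes "\<forall>x\<in>#A. 0 < x" "\<forall>y\<in>#B. 0 < y"
  shows "image_mset ln (pairwise_mset (*) A B) = pairwise_mset (+) (image_mset ln A) (image_mset ln B)"
  unfolding image_mset_pairwise_mset pairwise_mset_image_mset
  using assms by (auto intro!: pairwise_mset_cong simp: ln_mult_pos)

lemma image_mset_ln_shift_eq:
  fixes A C :: "real multiset"
  assumes "\<forall>x\<in>#A. 0 < x" "\<forall>x\<in>#C. 0 < x"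
    and "image_mset ln A = image_mset ((+) t) (image_mset ln C)"
  shows "A = image_mset ((*) (exp t)) C"
proof -
  have "image_mset exp (image_mset ln A) = image_mset id A"
    unfolding multiset.map_comp by (rule image_mset_cong) (use assms(1) in auto)
  also have "image_mset exp (image_mset ln A) = image_mset ((*) (exp t)) C"
    unfolding assms(3) multiset.map_comp
    by (rule image_mset_cong) (use assms(2) in \<open>auto simp: exp_add\<close>)
  finally show ?thesis by simp
qed

lemma pairwise_times_eq_imp_rescaled:
  fixes A B C E :: "real multiset"
  assumes d: "d = 2 \<or> d = 3" and sizes: "size A = d" "size B = d" "size C = d" "size E = d"
    and pos: "\<forall>x\<in>#A. 0 < x" "\<forall>x\<in>#B. 0 < x" "\<forall>x\<in>#C. 0 < x" "\<forall>x\<in>#E. 0 < x"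
    and eq: "pairwise_mset (*) A B = pairwise_mset (*) C E"
  shows "\<exists>t>0. (A = image_mset ((*) t) C \<and> E = image_mset ((*) t) B) \<or>
               (A = image_mset ((*) t) E \<and> C = image_mset ((*) t) B)"
proof -
  have "pairwise_mset (+) (image_mset ln A) (image_mset ln B) = image_mset ln (pairwise_mset (*) A B)"
    using pos by (simp add: ln_pairwise_times)
  also have "\<dots> = pairwise_mset (+) (image_mset ln C) (image_mset ln E)"
    using pos by (simp add: eq ln_pairwise_times)
  finally have "\<exists>t. (image_mset ln A = image_mset ((+) t) (image_mset ln C) \<and>
                     image_mset ln E = image_mset ((+) t) (image_mset ln B)) \<or>
                    (image_mset ln A = image_mset ((+) t) (image_mset ln E) \<and>
                     image_mset ln C = image_mset ((+) t) (image_mset ln B))"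
    using d sizes by (auto intro: pairwise_plus_size_2_eq pairwise_plus_size_3_eq)
  then obtain t where
    "(image_mset ln A = image_mset ((+) t) (image_mset ln C) \<and>
      image_mset ln E = image_mset ((+) t) (image_mset ln B)) \<or>
     (image_mset ln A = image_mset ((+) t) (image_mset ln E) \<and>
      image_mset ln C = image_mset ((+) t) (image_mset ln B))" ..
  hence "(A = image_mset ((*) (exp t)) C \<and> E = image_mset ((*) (exp t)) B) \<or>
         (A = image_mset ((*) (exp t)) E \<and> C = image_mset ((*) (exp t)) B)"
    using image_mset_ln_shift_eq[OF pos(1,3)] image_mset_ln_shift_eq[OF pos(4,2)]
      image_mset_ln_shift_eq[OF pos(1,4)] image_mset_ln_shift_eq[OF pos(3,2)] by blast
  thus ?thesis using exp_gt_zero by blast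
qed

lemma rescaled_unit_mset_eq:
  fixes A C :: "real multiset"
  assumes "A = image_mset ((*) t) C" "0 < t"
    and "(\<Sum>x\<in>#A. x\<^sup>2) = 1" "(\<Sum>x\<in>#C. x\<^sup>2) = 1"
  shows "A = C"
proof -
  have "(\<Sum>x\<in>#A. x\<^sup>2) = t\<^sup>2 * (\<Sum>x\<in>#C. x\<^sup>2)"
    unfolding assms(1)
    by (simp add: sum_mset_distrib_left power_mult_distrib multiset.map_comp comp_def)
  hence "t = 1" using assms(2-4) by (simp add: power2_eq_1_iff)
  moreover have "(*) 1 = (id :: real \<Rightarrow> real)" by auto
  ultimately show ?thesis using assms(1) by simp
qed

lemma pairwise_times_eq_imp_factors_eq:
  fixes A B C E :: "real multiset"
  assumes "d = 2 \<or> d = 3" "size A = d" "size B = d" "size C = d" "size E = d"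
    and "\<forall>x\<in>#A. 0 < x" "\<forall>x\<in>#B. 0 < x" "\<forall>x\<in>#C. 0 < x" "\<forall>x\<in>#E. 0 < x"
    and "(\<Sum>x\<in>#A. x\<^sup>2) = 1" "(\<Sum>x\<in>#B. x\<^sup>2) = 1"
    and "(\<Sum>x\<in>#C. x\<^sup>2) = 1" "(\<Sum>x\<in>#E. x\<^sup>2) = 1"
    and "pairwise_mset (*) A B = pairwise_mset (*) C E"
  shows "(A = C \<and> B = E) \<or> (A = E \<and> B = C)"
  using pairwise_times_eq_imp_rescaled[OF assms(1-9,14)] rescaled_unit_mset_eq assms(10-13)
  by metis

lemma value_mset_pairwise:
  fixes f :: "'a::finite \<Rightarrow> 'c" and g :: "'b::finite \<Rightarrow> 'd"
  shows "value_mset (\<lambda>k. h (f (fst k)) (g (snd k))) = pairwise_mset h (value_mset f) (value_mset g)"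
proof -
  have "value_mset (\<lambda>k. h (f (fst k)) (g (snd k))) = (\<Sum>i\<in>UNIV. value_mset (\<lambda>j. h (f i) (g j)))"
    by (simp add: value_mset_eq_sum sum.cartesian_product split_def flip: UNIV_Times_UNIV)
  also have "\<dots> = (\<Sum>x\<in>#value_mset f. image_mset (h x) (value_mset g))"
    by (simp only: sum_mset_value_mset image_mset_value_mset)
  finally show ?thesis by (simp add: pairwise_mset_def)
qed

lemma value_mset_product_eq_imp_factors_eq:
  fixes a b c e :: "'n::finite \<Rightarrow> real"
  assumes "CARD('n) = 2 \<or> CARD('n) = 3"
    and "\<forall>i. 0 < a i" "\<forall>i. 0 < b i" "\<forall>i. 0 < c i" "\<forall>i. 0 < e i"
    and "(\<Sum>i\<in>UNIV. (a i)\<^sup>2) = 1" "(\<Sum>i\<in>UNIV. (b i)\<^sup>2) = 1"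
    and "(\<Sum>i\<in>UNIV. (c i)\<^sup>2) = 1" "(\<Sum>i\<in>UNIV. (e i)\<^sup>2) = 1"
    and "value_mset (\<lambda>k. a (fst k) * b (snd k)) = value_mset (\<lambda>k. c (fst k) * e (snd k))"
  shows "(value_mset a = value_mset c \<and> value_mset b = value_mset e) \<or>
         (value_mset a = value_mset e \<and> value_mset b = value_mset c)"
  using assms
  by (intro pairwise_times_eq_imp_factors_eq[of "CARD('n)"])
    (simp_all add: image_mset_value_mset sum_mset_value_mset flip: value_mset_pairwise)

theorem mainTheorem11:
  fixes mu lam mub lamb :: "complex^'n^'n"
  assumes "CARD('n) = 2 \<or> CARD('n) = 3"
    and "normalized mu" "normalized lam" "normalized mub" "normalized lamb"
    and "schmidt_rank mu = CARD('n)" "schmidt_rank lam = CARD('n)"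
    and "schmidt_rank mub = CARD('n)" "schmidt_rank lamb = CARD('n)"
    and "LU_equiv (state_tensor mu lam) (state_tensor mub lamb)"
  shows "(LU_equiv mu mub \<and> LU_equiv lam lamb) \<or> (LU_equiv lam mub \<and> LU_equiv mu lamb)"
proof -
  obtain s1 where s1: "\<forall>i. 0 < s1 i" "(\<Sum>i\<in>UNIV. (s1 i)\<^sup>2) = 1" "LU_equiv (diag_mat s1) mu"
    using schmidt_normal_form[OF assms(2,6)] .
  obtain s2 where s2: "\<forall>i. 0 < s2 i" "(\<Sum>i\<in>UNIV. (s2 i)\<^sup>2) = 1" "LU_equiv (diag_mat s2) lam"
    using schmidt_normal_form[OF assms(3,7)] .
  obtain s3 where s3: "\<forall>i. 0 < s3 i" "(\<Sum>i\<in>UNIV. (s3 i)\<^sup>2) = 1" "LU_equiv (diag_mat s3) mub"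
    using schmidt_normal_form[OF assms(4,8)] .
  obtain s4 where s4: "\<forall>i. 0 < s4 i" "(\<Sum>i\<in>UNIV. (s4 i)\<^sup>2) = 1" "LU_equiv (diag_mat s4) lamb"
    using schmidt_normal_form[OF assms(5,9)] .
  have "LU_equiv (state_tensor (diag_mat s1) (diag_mat s2)) (state_tensor (diag_mat s3) (diag_mat s4))"
    using LU_equiv_trans[OF LU_equiv_trans[OF LU_equiv_state_tensor[OF s1(3) s2(3)] assms(10)]
        LU_equiv_sym[OF LU_equiv_state_tensor[OF s3(3) s4(3)]]] .
  hence "value_mset (\<lambda>k. s1 (fst k) * s2 (snd k)) = value_mset (\<lambda>k. s3 (fst k) * s4 (snd k))"
    using s1 s2 s3 s4 unfolding state_tensor_diag_mat
    by (intro LU_equiv_diag_mat_imp_value_mset_eq) (simp_all add: less_imp_le)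
  hence "(value_mset s1 = value_mset s3 \<and> value_mset s2 = value_mset s4) \<or>
         (value_mset s1 = value_mset s4 \<and> value_mset s2 = value_mset s3)"
    using assms(1) s1 s2 s3 s4 by (intro value_mset_product_eq_imp_factors_eq) simp_all
  thus ?thesis
    using LU_equiv_if_schmidt_coeffs_eq[OF s1(3) s3(3)] LU_equiv_if_schmidt_coeffs_eq[OF s2(3) s4(3)]
      LU_equiv_if_schmidt_coeffs_eq[OF s2(3) s3(3)] LU_equiv_if_schmidt_coeffs_eq[OF s1(3) s4(3)]
    by blast
qed

end
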